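(* Let $n\ge 3$, $q=\frac{2n}{n-2}$, $\kappa=\frac{n-1}{n}$. Identify $S^1$ with $[-\pi,\pi]$ with endpoints identified, and let $\lambda=-1$ on $(-\pi,0)$, $\lambda=1$ on $(0,\pi)$. Let $N$ be a smooth positive function on $S^1$, $\gamma_N=-\frac{\int_{S^1}\lambda N}{\int_{S^1}N}$, and $t,\eta,\mu\in\mathbb{R}$. For $d>0$ let $\psi_d$ be the unique positive solution in $W^{2,\infty}(S^1)$ of $$-2\kappa q\,d^{-2q/n}\psi_d''-2\eta^2d^{-2q}\psi_d^{-q-1}-\kappa(\mu d^{-q}+\gamma_N+\lambda)^2\psi_d^{-q-1}+\kappa(t+\lambda)^2\psi_d^{q-1}=0,$$ and let $\mathcal{F}(d)=\psi_d(0)$. Suppose $|t|\neq1$ and define $$M_{d,\pm}=\left[\frac{2\eta^2d^{-2q}+\kappa(\mu d^{-q}+\gamma_N\pm1)^2}{\kappa(t\pm1)^2}\right]^{\frac{1}{2q}},\quad m_d=\min(M_{d,+},M_{d,-}),\quad M_d=\max(M_{d,+},M_{d,-}).$$ Then $m_d\le\psi_d\le M_d$ on $S^1$ for all $d>0$, and in particular $m_d\le\mathcal{F}(d)\le M_d$. *)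

theory Defs
  imports "HOL-Analysis.Analysis"
begin

text \<open>S^1 is identified with [-pi,pi] with endpoints glued; functions on S^1 are
  2pi-periodic functions on the real line.\<close>

definition periodic_2pi :: "(real \<Rightarrow> real) \<Rightarrow> bool" where
  "periodic_2pi f \<longleftrightarrow> (\<forall>x. f (x + 2 * pi) = f x)"

definition smooth_fun :: "(real \<Rightarrow> real) \<Rightarrow> bool" where
  "smooth_fun f \<longleftrightarrow> (\<forall>k x. ((deriv ^^ k) f) differentiable (at x))"

text \<open>lambda = -1 on (-pi,0), 1 on (0,pi), extended periodically; the values at the
  null set {k pi} are irrelevant and set to 0.\<close>
definition circ_lambda :: "real \<Rightarrow> real" where
  "circ_lambda x = (if sin x < 0 then -1 else if sin x > 0 then 1 else 0)"

definition gamma_N :: "(real \<Rightarrow> real) \<Rightarrow> real" where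
  "gamma_N N = - (integral {-pi..pi} (\<lambda>x. circ_lambda x * N x) / integral {-pi..pi} N)"

text \<open>psi is a positive W^{2,infinity}(S^1) solution: psi is 2pi-periodic, C^1 with
  Lipschitz derivative psi1, and the equation holds a.e. with psi'' the a.e. derivative
  of psi1.\<close>
definition is_W2inf_solution ::
  "nat \<Rightarrow> real \<Rightarrow> real \<Rightarrow> real \<Rightarrow> real \<Rightarrow> real \<Rightarrow> (real \<Rightarrow> real) \<Rightarrow> bool" where
  "is_W2inf_solution n gam t eta mu d psi \<longleftrightarrow>
     (let q = 2 * real n / (real n - 2); \<kappa> = (real n - 1) / real n in
     periodic_2pi psi \<and> (\<forall>x. psi x > 0) \<and>
     (\<exists>psi1 C. (\<forall>x. (psi has_real_derivative psi1 x) (at x)) \<and> C-lipschitz_on UNIV psi1 \<and>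
        (AE x in lborel. \<exists>psi2. (psi1 has_real_derivative psi2) (at x) \<and>
           - 2 * \<kappa> * q * d powr (- 2 * q / real n) * psi2
           - 2 * eta\<^sup>2 * d powr (- 2 * q) * psi x powr (- q - 1)
           - \<kappa> * (mu * d powr (- q) + gam + circ_lambda x)\<^sup>2 * psi x powr (- q - 1)
           + \<kappa> * (t + circ_lambda x)\<^sup>2 * psi x powr (q - 1) = 0)))"

definition M_pm :: "nat \<Rightarrow> real \<Rightarrow> real \<Rightarrow> real \<Rightarrow> real \<Rightarrow> real \<Rightarrow> real \<Rightarrow> real" where
  "M_pm n gam t eta mu d s =
     (let q = 2 * real n / (real n - 2); \<kappa> = (real n - 1) / real n in
      ((2 * eta\<^sup>2 * d powr (- 2 * q) + \<kappa> * (mu * d powr (- q) + gam + s)\<^sup>2)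
        / (\<kappa> * (t + s)\<^sup>2)) powr (1 / (2 * q)))"

end

theory Submission
  imports Defs
begin

text \<open>Where lambda = s, the equation reads
  2 kappa q d^(-2q/n) psi'' = psi^(-q-1) (kappa (t+s)^2 psi^(2q) - A_s) with
  A_s = 2 eta^2 d^(-2q) + kappa (mu d^(-q) + gamma_N + s)^2, and M_(d,s) is exactly the value
  of psi at which the bracket vanishes. So a.e. psi'' > 0 where psi > M_d and psi'' < 0
  where psi < m_d. Since psi' is Lipschitz, psi'' > 0 a.e. near a point makes psi' strictly
  increasing there, so psi increases on one side of it; hence the periodic function psi cannot
  attain its global maximum above M_d, and symmetrically not its global minimum below m_d.\<close>

lemma negligible_AE_lborel_exceptions:
  assumes "AE x in lborel. P x"
  shows "negligible {x::real. \<not> P x}"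
proof -
  obtain N where "N \<in> null_sets lborel" "{x. \<not> P x} \<subseteq> N"
    using assms by (auto simp: eventually_ae_filter)
  then show ?thesis
    using negligible_subset negligible_iff_null_sets null_sets_completionI by blast
qed

lemma AE_lborel_obtain_in_interval:
  assumes "AE x in lborel. P x" "(a::real) < b"
  obtains x where "a < x" "x < b" "P x"
proof -
  have "\<not> {a<..<b} \<subseteq> {x. \<not> P x}"
    using negligible_AE_lborel_exceptions[OF assms(1)] negligible_subset
      negligible_interval(2)[of a b] assms(2) by auto
  then show ?thesis using that by auto
qed

lemma AE_lborel_in_subinterval:
  assumes "AE x in lborel. a < x \<and> x < b \<longrightarrow> P x" "a \<le> c" "d \<le> (b::real)"
  shows "AE x in lborel. c < x \<and> x < d \<longrightarrow> P x"
  using assms(1) by eventually_elim (use assms(2,3) in linarith)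

lemma DERIV_pos_obtain_greater_right:
  fixes g :: "real \<Rightarrow> real"
  assumes "(g has_real_derivative D) (at x)" "D > 0" "x < b"
  obtains z where "x < z" "z < b" "g x < g z"
proof -
  obtain e where e: "e > 0" "\<forall>h>0. h < e \<longrightarrow> g x < g (x + h)"
    using DERIV_pos_inc_right[OF assms(1,2)] by blast
  define h where "h = min (e/2) ((b - x)/2)"
  have h: "0 < h" "h \<le> e/2" "h \<le> (b - x)/2"
    unfolding h_def using e(1) assms(3) by (simp_all only: min.cobounded1 min.cobounded2) simp
  show ?thesis
  proof (rule that)
    show "x < x + h" "x + h < b" using h assms(3) by simp_all
    show "g x < g (x + h)" using e h by simp
  qed
qed

lemma last_downcrossing_no_pos_deriv:
  fixes g :: "real \<Rightarrow> real"
  assumes "a \<le> b" "continuous_on {a..b} g" "g b < y" "y < g a"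
  obtains x where "a < x" "x < b" "g x = y" "\<not> (\<exists>D>0. (g has_real_derivative D) (at x))"
proof -
  define S where "S = {a..b} \<inter> g -` {y..}"
  have "closed S"
    unfolding S_def using assms(2) by (intro continuous_closed_preimage) auto
  moreover have "a \<in> S" "bdd_above S"
    using assms unfolding S_def by auto
  ultimately have "Sup S \<in> S"
    by (intro closed_contains_Sup) auto
  define x where "x = Sup S"
  have upper: "z \<le> x" if "z \<in> S" for z
    using that \<open>bdd_above S\<close> unfolding x_def by (rule cSup_upper)
  have x: "a \<le> x" "x \<le> b" "y \<le> g x"
    using \<open>Sup S \<in> S\<close> unfolding x_def S_def by auto
  obtain z where z: "x \<le> z" "z \<le> b" "g z = y"
    using IVT2'[of g b y x] x assms(2,3) continuous_on_subset[OF assms(2), of "{x..b}"] by auto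
  have "z \<in> S" using z x unfolding S_def by auto
  then have gx: "g x = y" using upper z by force
  then have ax: "a < x" "x < b" using x assms(3,4) by (auto simp: le_less)
  have "\<not> (\<exists>D>0. (g has_real_derivative D) (at x))"
  proof
    assume "\<exists>D>0. (g has_real_derivative D) (at x)"
    then obtain z where "x < z" "z < b" "g x < g z"
      using DERIV_pos_obtain_greater_right ax(2) by metis
    then have "z \<in> S" using gx x unfolding S_def by auto
    then show False using upper \<open>x < z\<close> by force
  qed
  then show ?thesis using that ax gx by blast
qed

text \<open>Every value between g b and g a is taken at a last downcrossing, hence at an exceptional
  point; but the Lipschitz image of the negligible exceptional set is negligible.\<close>

lemma lipschitz_AE_pos_deriv_imp_le:
  fixes g :: "real \<Rightarrow> real"
  assumes lip: "C-lipschitz_on UNIV g" and "a \<le> b"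
    and ae: "AE x in lborel. a < x \<and> x < b \<longrightarrow> (\<exists>D>0. (g has_real_derivative D) (at x))"
  shows "g a \<le> g b"
proof (rule ccontr)
  assume "\<not> g a \<le> g b"
  define E where "E = {x. \<not> (a < x \<and> x < b \<longrightarrow> (\<exists>D>0. (g has_real_derivative D) (at x)))}"
  have "negligible (g ` E)"
  proof (rule negligible_locally_Lipschitz_image)
    show "negligible E"
      unfolding E_def by (rule negligible_AE_lborel_exceptions[OF ae])
    show "\<exists>T B. open T \<and> x \<in> T \<and> (\<forall>y\<in>E \<inter> T. norm (g y - g x) \<le> B * norm (y - x))" for x
      using lipschitz_onD[OF lip] by (intro exI[of _ UNIV] exI[of _ C]) (simp add: dist_real_def)
  qed simp
  moreover have "{g b<..<g a} \<subseteq> g ` E"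
  proof
    fix y assume "y \<in> {g b<..<g a}"
    then obtain x where "a < x" "x < b" "g x = y" "\<not> (\<exists>D>0. (g has_real_derivative D) (at x))"
      using last_downcrossing_no_pos_deriv[OF \<open>a \<le> b\<close>, of g y]
        continuous_on_subset[OF lipschitz_on_continuous_on[OF lip]] by auto
    then show "y \<in> g ` E" unfolding E_def by force
  qed
  ultimately have "negligible {g b<..<g a}" by (rule negligible_subset)
  then show False using \<open>\<not> g a \<le> g b\<close> negligible_interval(2)[of "g b" "g a"] by simp
qed

lemma lipschitz_AE_pos_deriv_imp_less:
  fixes g :: "real \<Rightarrow> real"
  assumes lip: "C-lipschitz_on UNIV g" and "a < b"
    and ae: "AE x in lborel. a < x \<and> x < b \<longrightarrow> (\<exists>D>0. (g has_real_derivative D) (at x))"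
  shows "g a < g b"
proof -
  obtain x D where x: "a < x" "x < b" "D > 0" "(g has_real_derivative D) (at x)"
    using AE_lborel_obtain_in_interval[OF ae \<open>a < b\<close>] by blast
  then obtain z where z: "x < z" "z < b" "g x < g z"
    using DERIV_pos_obtain_greater_right by metis
  have "g a \<le> g x"
    using x by (intro lipschitz_AE_pos_deriv_imp_le[OF lip] AE_lborel_in_subinterval[OF ae]) auto
  moreover have "g z \<le> g b"
    using x z by (intro lipschitz_AE_pos_deriv_imp_le[OF lip] AE_lborel_in_subinterval[OF ae]) auto
  ultimately show ?thesis using z by simp
qed

lemma AE_pos_second_deriv_no_local_max:
  fixes f g :: "real \<Rightarrow> real"
  assumes der: "\<And>x. (f has_real_derivative g x) (at x)" and lip: "C-lipschitz_on UNIV g"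
    and "\<delta> > 0"
    and ae: "AE x in lborel. x0 - \<delta> < x \<and> x < x0 + \<delta> \<longrightarrow> (\<exists>D>0. (g has_real_derivative D) (at x))"
  obtains x where "f x0 < f x"
proof (cases "g x0 \<ge> 0")
  case True
  have "x0 < x0 + \<delta>/2" using \<open>\<delta> > 0\<close> by simp
  then obtain z where z: "x0 < z" "z < x0 + \<delta>/2" "f (x0 + \<delta>/2) - f x0 = (\<delta>/2) * g z"
    using MVT2[of x0 "x0 + \<delta>/2" f g] der by auto
  have "g x0 < g z"
    using z by (intro lipschitz_AE_pos_deriv_imp_less[OF lip] AE_lborel_in_subinterval[OF ae]) auto
  then have "0 < (\<delta>/2) * g z" using True \<open>\<delta> > 0\<close> by simp
  then have "f x0 < f (x0 + \<delta>/2)" using z(3) by linarith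
  then show ?thesis by (rule that)
next
  case False
  have "x0 - \<delta>/2 < x0" using \<open>\<delta> > 0\<close> by simp
  then obtain z where z: "x0 - \<delta>/2 < z" "z < x0" "f x0 - f (x0 - \<delta>/2) = (\<delta>/2) * g z"
    using MVT2[of "x0 - \<delta>/2" x0 f g] der by auto
  have "g z < g x0"
    using z by (intro lipschitz_AE_pos_deriv_imp_less[OF lip] AE_lborel_in_subinterval[OF ae]) auto
  then have "(\<delta>/2) * g z < 0" using False \<open>\<delta> > 0\<close> by (simp add: mult_pos_neg)
  then have "f x0 < f (x0 - \<delta>/2)" using z(3) by linarith
  then show ?thesis by (rule that)
qed

lemma periodic_2pi_int_shift:
  assumes "periodic_2pi f"
  shows "f (x + 2 * pi * of_int k) = f x"
proof (induction k rule: int_induct[where k = 0])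
  case (step1 i)
  have "x + 2 * pi * of_int (i + 1) = (x + 2 * pi * of_int i) + 2 * pi"
    by (simp add: algebra_simps)
  with assms step1 show ?case unfolding periodic_2pi_def by metis
next
  case (step2 i)
  have "x + 2 * pi * of_int i = (x + 2 * pi * of_int (i - 1)) + 2 * pi"
    by (simp add: algebra_simps)
  with assms step2 show ?case unfolding periodic_2pi_def by metis
qed simp

lemma periodic_2pi_obtain_in_period:
  assumes "periodic_2pi f"
  obtains y where "y \<in> {-pi..pi}" "f y = f x"
proof
  define k where "k = \<lfloor>(x + pi) / (2 * pi)\<rfloor>"
  have "0 < 2 * pi" by simp
  moreover have "of_int k \<le> (x + pi) / (2 * pi)" "(x + pi) / (2 * pi) < of_int k + 1"
    unfolding k_def by (rule of_int_floor_le, rule real_of_int_floor_add_one_gt)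
  ultimately have "of_int k * (2 * pi) \<le> x + pi" "x + pi < (of_int k + 1) * (2 * pi)"
    by (simp_all only: pos_le_divide_eq pos_divide_less_eq)
  then show "x - 2 * pi * of_int k \<in> {-pi..pi}" by (simp add: algebra_simps)
  show "f (x - 2 * pi * of_int k) = f x"
    using periodic_2pi_int_shift[OF assms, of "x - 2 * pi * of_int k" k] by simp
qed

lemma periodic_2pi_attains_max:
  assumes "periodic_2pi f" "continuous_on UNIV f"
  obtains x0 where "\<And>y. f y \<le> f x0"
proof -
  obtain x0 where "\<forall>y\<in>{-pi..pi}. f y \<le> f x0"
    using continuous_attains_sup[of "{-pi..pi}" f] continuous_on_subset[OF assms(2)] by auto
  then show ?thesis
    using that periodic_2pi_obtain_in_period[OF assms(1)] by metis
qed

text \<open>At a global maximum above M, f would be strictly convex nearby, which is impossible.\<close>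

lemma periodic_2pi_max_principle:
  fixes f g :: "real \<Rightarrow> real"
  assumes per: "periodic_2pi f" and der: "\<And>x. (f has_real_derivative g x) (at x)"
    and lip: "C-lipschitz_on UNIV g"
    and ae: "AE x in lborel. M < f x \<longrightarrow> (\<exists>D>0. (g has_real_derivative D) (at x))"
  shows "f x \<le> M"
proof (rule ccontr)
  assume "\<not> f x \<le> M"
  have cont: "continuous_on UNIV f"
    using der by (meson DERIV_isCont continuous_at_imp_continuous_on)
  obtain x0 where max: "\<And>y. f y \<le> f x0"
    using periodic_2pi_attains_max[OF per cont] by blast
  have "open {y. M < f y}" "x0 \<in> {y. M < f y}"
    using cont max[of x] \<open>\<not> f x \<le> M\<close> by (auto intro: open_Collect_less)
  then obtain \<delta> where "\<delta> > 0" and near: "\<And>y. \<bar>y - x0\<bar> < \<delta> \<Longrightarrow> M < f y"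
    unfolding open_real by force
  have "AE x in lborel. x0 - \<delta> < x \<and> x < x0 + \<delta> \<longrightarrow> (\<exists>D>0. (g has_real_derivative D) (at x))"
    using ae
  proof eventually_elim
    case (elim y)
    show ?case using elim near[of y] by (simp add: abs_diff_less_iff)
  qed
  then obtain y where "f x0 < f y"
    using AE_pos_second_deriv_no_local_max[OF der lip \<open>\<delta> > 0\<close>] by blast
  then show False using max[of y] by simp
qed

lemma periodic_2pi_min_principle:
  fixes f g :: "real \<Rightarrow> real"
  assumes per: "periodic_2pi f" and der: "\<And>x. (f has_real_derivative g x) (at x)"
    and lip: "C-lipschitz_on UNIV g"
    and ae: "AE x in lborel. f x < m \<longrightarrow> (\<exists>D<0. (g has_real_derivative D) (at x))"
  shows "m \<le> f x"
proof -
  have "periodic_2pi (\<lambda>x. - f x)" using per unfolding periodic_2pi_def by simp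
  moreover have "((\<lambda>x. - f x) has_real_derivative - g x) (at x)" for x
    using der by (rule DERIV_minus)
  moreover have "AE x in lborel. - m < - f x \<longrightarrow> (\<exists>D>0. ((\<lambda>x. - g x) has_real_derivative D) (at x))"
    using ae
  proof eventually_elim
    case (elim y)
    show ?case
    proof
      assume "- m < - f y"
      then obtain D where "D < 0" "(g has_real_derivative D) (at y)" using elim by auto
      then show "\<exists>D>0. ((\<lambda>x. - g x) has_real_derivative D) (at y)"
        by (intro exI[of _ "- D"]) (simp add: DERIV_minus)
    qed
  qed
  ultimately have "- f x \<le> - m"
    by (rule periodic_2pi_max_principle[OF _ _ lipschitz_on_minus[OF lip]])
  then show ?thesis by simp
qed

lemma balance_equation_sign:
  fixes K A B q p y :: real
  assumes "K > 0" "q > 0" "B > 0" "A \<ge> 0" "p > 0"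
    and eq: "- K * y - A * p powr (- q - 1) + B * p powr (q - 1) = 0"
  shows "(A / B) powr (1 / (2 * q)) < p \<Longrightarrow> 0 < y"
    and "p < (A / B) powr (1 / (2 * q)) \<Longrightarrow> y < 0"
proof -
  have "p powr (q - 1) = p powr (2 * q) * p powr (- q - 1)"
    by (simp add: powr_add[symmetric])
  then have Ky: "K * y = p powr (- q - 1) * (B * p powr (2 * q) - A)"
    using eq by (simp add: algebra_simps)
  have "0 < p powr (- q - 1)" using assms(5) by simp
  have root: "((A / B) powr (1 / (2 * q))) powr (2 * q) = A / B"
    using assms(2-4) by (simp add: powr_powr)
  show "0 < y" if "(A / B) powr (1 / (2 * q)) < p"
  proof -
    have "A / B < p powr (2 * q)"
      using powr_less_mono2[of "2 * q", OF _ _ that] assms(2) root by simp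
    then have "A < B * p powr (2 * q)" using assms(3) by (simp add: divide_less_eq mult.commute)
    then have "0 < K * y" using Ky \<open>0 < p powr (- q - 1)\<close> by simp
    then show ?thesis using assms(1) by (simp add: zero_less_mult_iff)
  qed
  show "y < 0" if "p < (A / B) powr (1 / (2 * q))"
  proof -
    have "p powr (2 * q) < A / B"
      using powr_less_mono2[of "2 * q", OF _ _ that] assms(2,5) root by simp
    then have "B * p powr (2 * q) < A" using assms(3) by (simp add: less_divide_eq mult.commute)
    then have "K * y < 0" using Ky \<open>0 < p powr (- q - 1)\<close> by (simp add: mult_pos_neg)
    then show ?thesis using assms(1) by (simp add: mult_less_0_iff)
  qed
qed

text \<open>The left-hand side of the equation for psi, with s, p, y standing for
  lambda x, psi x, psi'' x.\<close>

definition lichnerowicz_lhs ::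
  "nat \<Rightarrow> real \<Rightarrow> real \<Rightarrow> real \<Rightarrow> real \<Rightarrow> real \<Rightarrow> real \<Rightarrow> real \<Rightarrow> real \<Rightarrow> real" where
  "lichnerowicz_lhs n gam t eta mu d s p y =
     (let q = 2 * real n / (real n - 2); \<kappa> = (real n - 1) / real n in
      - 2 * \<kappa> * q * d powr (- 2 * q / real n) * y
      - 2 * eta\<^sup>2 * d powr (- 2 * q) * p powr (- q - 1)
      - \<kappa> * (mu * d powr (- q) + gam + s)\<^sup>2 * p powr (- q - 1)
      + \<kappa> * (t + s)\<^sup>2 * p powr (q - 1))"

lemma is_W2inf_solution_iff:
  "is_W2inf_solution n gam t eta mu d psi \<longleftrightarrow>
     periodic_2pi psi \<and> (\<forall>x. psi x > 0) \<and>
     (\<exists>psi1 C. (\<forall>x. (psi has_real_derivative psi1 x) (at x)) \<and> C-lipschitz_on UNIV psi1 \<and>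
        (AE x in lborel. \<exists>psi2. (psi1 has_real_derivative psi2) (at x) \<and>
           lichnerowicz_lhs n gam t eta mu d (circ_lambda x) (psi x) psi2 = 0))"
  by (simp add: is_W2inf_solution_def lichnerowicz_lhs_def Let_def)


lemma lichnerowicz_lhs_sign:
  assumes "n \<ge> 3" "\<bar>t\<bar> \<noteq> 1" "d > 0" "s = 1 \<or> s = -1" "p > 0"
    and "lichnerowicz_lhs n gam t eta mu d s p y = 0"
  shows "max (M_pm n gam t eta mu d 1) (M_pm n gam t eta mu d (-1)) < p \<Longrightarrow> 0 < y"
    and "p < min (M_pm n gam t eta mu d 1) (M_pm n gam t eta mu d (-1)) \<Longrightarrow> y < 0"
proof -
  define q where "q = 2 * real n / (real n - 2)"
  define \<kappa> where "\<kappa> = (real n - 1) / real n"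
  define K where "K = 2 * \<kappa> * q * d powr (- 2 * q / real n)"
  define A where "A = 2 * eta\<^sup>2 * d powr (- 2 * q) + \<kappa> * (mu * d powr (- q) + gam + s)\<^sup>2"
  define B where "B = \<kappa> * (t + s)\<^sup>2"
  have "q > 0" "\<kappa> > 0" using assms(1) unfolding q_def \<kappa>_def by auto
  then have "K > 0" "A \<ge> 0" "B > 0"
    using assms(2-4) unfolding K_def A_def B_def by auto
  have "- K * y - A * p powr (- q - 1) + B * p powr (q - 1) = 0"
    using assms(6) unfolding lichnerowicz_lhs_def Let_def q_def[symmetric] \<kappa>_def[symmetric]
    by (simp add: K_def A_def B_def algebra_simps)
  note sign = balance_equation_sign[OF \<open>K > 0\<close> \<open>q > 0\<close> \<open>B > 0\<close> \<open>A \<ge> 0\<close> \<open>p > 0\<close> this]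
  have "M_pm n gam t eta mu d s = (A / B) powr (1 / (2 * q))"
    unfolding M_pm_def Let_def A_def B_def q_def \<kappa>_def by simp
  moreover have "min (M_pm n gam t eta mu d 1) (M_pm n gam t eta mu d (-1)) \<le> M_pm n gam t eta mu d s"
    "M_pm n gam t eta mu d s \<le> max (M_pm n gam t eta mu d 1) (M_pm n gam t eta mu d (-1))"
    using assms(4) by auto
  ultimately show "max (M_pm n gam t eta mu d 1) (M_pm n gam t eta mu d (-1)) < p \<Longrightarrow> 0 < y"
    and "p < min (M_pm n gam t eta mu d 1) (M_pm n gam t eta mu d (-1)) \<Longrightarrow> y < 0"
    using sign by auto
qed

lemma AE_lborel_circ_lambda_sign: "AE x in lborel. circ_lambda x = 1 \<or> circ_lambda x = -1"
proof -
  have "{x::real. sin x = 0} \<subseteq> range (\<lambda>i::int. of_int i * pi)"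
    by (auto simp: sin_zero_iff_int2)
  then have "countable {x::real. sin x = 0}" by (rule countable_subset) simp
  from AE_not_in[OF countable_imp_null_set_lborel[OF this]]
  have "AE x in lborel. sin (x::real) \<noteq> 0" by simp
  then show ?thesis by eventually_elim (auto simp: circ_lambda_def)
qed

lemma lichnerowicz_AE_second_deriv_sign:
  assumes "n \<ge> 3" "\<bar>t\<bar> \<noteq> 1" "d > 0" "\<And>x. psi x > 0"
    and ae: "AE x in lborel. \<exists>psi2. (psi1 has_real_derivative psi2) (at x) \<and>
               lichnerowicz_lhs n gam t eta mu d (circ_lambda x) (psi x) psi2 = 0"
  shows "AE x in lborel.
      (max (M_pm n gam t eta mu d 1) (M_pm n gam t eta mu d (-1)) < psi x
         \<longrightarrow> (\<exists>D>0. (psi1 has_real_derivative D) (at x))) \<and>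
      (psi x < min (M_pm n gam t eta mu d 1) (M_pm n gam t eta mu d (-1))
         \<longrightarrow> (\<exists>D<0. (psi1 has_real_derivative D) (at x)))"
  using ae AE_lborel_circ_lambda_sign
proof eventually_elim
  case (elim x)
  then obtain psi2 where "(psi1 has_real_derivative psi2) (at x)"
    "lichnerowicz_lhs n gam t eta mu d (circ_lambda x) (psi x) psi2 = 0" by blast
  then show ?case
    using lichnerowicz_lhs_sign[OF assms(1-3) elim(2) assms(4)] by blast
qed

theorem lemma3p12:
  fixes n :: nat and N :: "real \<Rightarrow> real" and t eta mu d :: real and psi :: "real \<Rightarrow> real"
  assumes "n \<ge> 3"
    and "smooth_fun N" and "periodic_2pi N" and "\<forall>x. N x > 0"
    and "\<bar>t\<bar> \<noteq> 1"
    and "d > 0"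
    and "is_W2inf_solution n (gamma_N N) t eta mu d psi"
  shows "(\<forall>x. min (M_pm n (gamma_N N) t eta mu d 1) (M_pm n (gamma_N N) t eta mu d (-1)) \<le> psi x
             \<and> psi x \<le> max (M_pm n (gamma_N N) t eta mu d 1) (M_pm n (gamma_N N) t eta mu d (-1)))
         \<and> min (M_pm n (gamma_N N) t eta mu d 1) (M_pm n (gamma_N N) t eta mu d (-1)) \<le> psi 0
         \<and> psi 0 \<le> max (M_pm n (gamma_N N) t eta mu d 1) (M_pm n (gamma_N N) t eta mu d (-1))"
proof -
  obtain psi1 C where per: "periodic_2pi psi" and pos: "\<And>x. psi x > 0"
    and der: "\<And>x. (psi has_real_derivative psi1 x) (at x)" and lip: "C-lipschitz_on UNIV psi1"
    and ae: "AE x in lborel. \<exists>psi2. (psi1 has_real_derivative psi2) (at x) \<and>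
               lichnerowicz_lhs n (gamma_N N) t eta mu d (circ_lambda x) (psi x) psi2 = 0"
    using assms(7) unfolding is_W2inf_solution_iff by blast
  have sign: "AE x in lborel.
      (max (M_pm n (gamma_N N) t eta mu d 1) (M_pm n (gamma_N N) t eta mu d (-1)) < psi x
         \<longrightarrow> (\<exists>D>0. (psi1 has_real_derivative D) (at x))) \<and>
      (psi x < min (M_pm n (gamma_N N) t eta mu d 1) (M_pm n (gamma_N N) t eta mu d (-1))
         \<longrightarrow> (\<exists>D<0. (psi1 has_real_derivative D) (at x)))"
    using lichnerowicz_AE_second_deriv_sign[OF assms(1,5,6) pos ae] .
  have "psi x \<le> max (M_pm n (gamma_N N) t eta mu d 1) (M_pm n (gamma_N N) t eta mu d (-1))" for x
    using sign by (intro periodic_2pi_max_principle[OF per der lip]) (auto elim: eventually_mono)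
  moreover have "min (M_pm n (gamma_N N) t eta mu d 1) (M_pm n (gamma_N N) t eta mu d (-1)) \<le> psi x" for x
    using sign by (intro periodic_2pi_min_principle[OF per der lip]) (auto elim: eventually_mono)
  ultimately show ?thesis by blast
qed

end
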